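(* Let $1<p<\infty$, $\varepsilon>0$, and let $u$ be a smooth solution of $u_t=a_{ij}(\nabla u)u_{ij}$ in $Q_1$, where $a_{ij}(q)=\delta_{ij}+(p-2)\frac{q_iq_j}{|q|^2+\varepsilon^2}$. Let $\varphi:=(|\nabla u|^2+\varepsilon^2)^{p/2}$. Then $$\partial_t\varphi-a_{ij}(\nabla u)\partial_{ij}\varphi\le0\quad\text{in }Q_1.$$
   Context: $\nabla$ is the spatial gradient, $u_{ij}=\partial_{x_ix_j}u$, summation over repeated indices, $Q_1=B_1\times(-1,0]$ with $B_1$ the unit ball of $\mathbb{R}^n$. *)

theory Defs
  imports "HOL-Analysis.Analysis"
begin

text \<open>Directional derivative of g at z in direction v, relative to the domain S
  (one-sided where z lies on the boundary of S).\<close>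
definition ddir :: "('a::real_normed_vector) set \<Rightarrow> 'a \<Rightarrow> ('a \<Rightarrow> real) \<Rightarrow> 'a \<Rightarrow> real" where
  "ddir S v g z = vector_derivative (\<lambda>h::real. g (z + h *\<^sub>R v)) (at 0 within {h. z + h *\<^sub>R v \<in> S})"

fun dds :: "('a::real_normed_vector) set \<Rightarrow> 'a list \<Rightarrow> ('a \<Rightarrow> real) \<Rightarrow> 'a \<Rightarrow> real" where
  "dds S [] g = g"
| "dds S (v # vs) g = ddir S v (dds S vs g)"

definition smooth_on :: "('a::real_normed_vector) set \<Rightarrow> ('a \<Rightarrow> real) \<Rightarrow> bool" where
  "smooth_on S g \<longleftrightarrow>
     (\<forall>vs. continuous_on S (dds S vs g) \<and>
       (\<forall>v. \<forall>z\<in>S. ((\<lambda>h::real. dds S vs g (z + h *\<^sub>R v)) has_vector_derivative dds S (v # vs) g z)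
                     (at 0 within {h. z + h *\<^sub>R v \<in> S})))"

definition Q1 :: "((real^'n) \<times> real) set" where
  "Q1 = ball 0 1 \<times> {-1<..0}"

definition espace :: "'n \<Rightarrow> (real^'n) \<times> real" where
  "espace i = (axis i 1, 0)"

definition etime :: "(real^'n) \<times> real" where
  "etime = (0, 1)"

definition pd1 :: "'n \<Rightarrow> ((real^'n) \<times> real \<Rightarrow> real) \<Rightarrow> (real^'n) \<times> real \<Rightarrow> real" where
  "pd1 i g = dds Q1 [espace i] g"

definition pd2 :: "'n \<Rightarrow> 'n \<Rightarrow> ((real^'n) \<times> real \<Rightarrow> real) \<Rightarrow> (real^'n) \<times> real \<Rightarrow> real" where
  "pd2 i j g = dds Q1 [espace i, espace j] g"

definition pdt :: "((real^'n) \<times> real \<Rightarrow> real) \<Rightarrow> (real^'n) \<times> real \<Rightarrow> real" where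
  "pdt g = dds Q1 [etime] g"

definition grad :: "((real^'n) \<times> real \<Rightarrow> real) \<Rightarrow> (real^'n) \<times> real \<Rightarrow> real^'n" where
  "grad g z = (\<chi> i. pd1 i g z)"

definition acoef :: "real \<Rightarrow> real \<Rightarrow> 'n \<Rightarrow> 'n \<Rightarrow> real^'n \<Rightarrow> real" where
  "acoef p \<epsilon> i j q = (if i = j then 1 else 0) + (p - 2) * (q $ i * q $ j) / ((norm q)\<^sup>2 + \<epsilon>\<^sup>2)"

end

theory Submission
  imports Defs
begin

text \<open>Differentiating the equation in \<open>x\<^sub>k\<close> shows that \<open>u\<^sub>k\<close> satisfies a linear equation whose
  third-order part is \<open>a\<^sub>i\<^sub>j (u\<^sub>k)\<^sub>i\<^sub>j\<close>; as partial derivatives commute, it cancels exactly against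
  the third-order terms of \<open>a\<^sub>i\<^sub>j \<phi>\<^sub>i\<^sub>j\<close>. With \<open>W = |\<nabla>u|\<^sup>2 + \<epsilon>\<^sup>2\<close>, \<open>H = D\<^sup>2u\<close> and \<open>m = \<nabla>u\<cdot>H\<nabla>u\<close>,
  what remains of \<open>\<phi>\<^sub>t - a\<^sub>i\<^sub>j \<phi>\<^sub>i\<^sub>j\<close> is \<open>-p W\<^bsup>p/2-3\<^esup> (W\<^sup>2|H|\<^sup>2 + p(p-2) m\<^sup>2)\<close>, and
  \<open>W\<^sup>2|H|\<^sup>2 + p(p-2) m\<^sup>2 = (W\<^sup>2|H|\<^sup>2 - m\<^sup>2) + (p-1)\<^sup>2 m\<^sup>2 \<ge> 0\<close> by Cauchy-Schwarz and \<open>|\<nabla>u|\<^sup>2 \<le> W\<close>.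
  Since \<open>u\<close> is only smooth up to the boundary of \<open>Q\<^sub>1\<close>, the symmetry of mixed partials is proved
  in the interior and extended to \<open>Q\<^sub>1\<close> by continuity.\<close>

section \<open>Symmetry of mixed partial derivatives in the plane\<close>

lemma mixed_partials_mean_value:
  fixes F Fs Ft Fst Fts :: "real \<Rightarrow> real \<Rightarrow> real" and d h :: real
  assumes h: "0 < h" "h < d"
    and Fs: "\<And>s t. \<bar>s\<bar> < d \<Longrightarrow> \<bar>t\<bar> < d \<Longrightarrow> ((\<lambda>x. F x t) has_real_derivative Fs s t) (at s)"
    and Fst: "\<And>s t. \<bar>s\<bar> < d \<Longrightarrow> \<bar>t\<bar> < d \<Longrightarrow> ((\<lambda>y. Fs s y) has_real_derivative Fst s t) (at t)"
    and Ft: "\<And>s t. \<bar>s\<bar> < d \<Longrightarrow> \<bar>t\<bar> < d \<Longrightarrow> ((\<lambda>y. F s y) has_real_derivative Ft s t) (at t)"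
    and Fts: "\<And>s t. \<bar>s\<bar> < d \<Longrightarrow> \<bar>t\<bar> < d \<Longrightarrow> ((\<lambda>x. Ft x t) has_real_derivative Fts s t) (at s)"
  obtains s1 t1 s2 t2 where "\<bar>s1\<bar> < h" "\<bar>t1\<bar> < h" "\<bar>s2\<bar> < h" "\<bar>t2\<bar> < h" "Fst s1 t1 = Fts s2 t2"
proof -
  text \<open>Both are \<open>(F h h - F h 0 - F 0 h + F 0 0) / h\<^sup>2\<close>, by the mean value theorem applied twice
    in either order.\<close>
  have "\<exists>s1. 0 < s1 \<and> s1 < h \<and> (F h h - F h 0) - (F 0 h - F 0 0) = (h - 0) * (Fs s1 h - Fs s1 0)"
    by (rule MVT2[OF h(1)]) (use h in \<open>auto intro!: derivative_intros Fs\<close>)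
  then obtain s1 where s1: "0 < s1" "s1 < h"
    "(F h h - F h 0) - (F 0 h - F 0 0) = (h - 0) * (Fs s1 h - Fs s1 0)" by blast
  have "\<exists>t1. 0 < t1 \<and> t1 < h \<and> Fs s1 h - Fs s1 0 = (h - 0) * Fst s1 t1"
    by (rule MVT2[OF h(1)]) (use h s1 in \<open>auto intro!: Fst\<close>)
  then obtain t1 where t1: "0 < t1" "t1 < h" "Fs s1 h - Fs s1 0 = (h - 0) * Fst s1 t1" by blast
  have "\<exists>t2. 0 < t2 \<and> t2 < h \<and> (F h h - F 0 h) - (F h 0 - F 0 0) = (h - 0) * (Ft h t2 - Ft 0 t2)"
    by (rule MVT2[OF h(1)]) (use h in \<open>auto intro!: derivative_intros Ft\<close>)
  then obtain t2 where t2: "0 < t2" "t2 < h"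
    "(F h h - F 0 h) - (F h 0 - F 0 0) = (h - 0) * (Ft h t2 - Ft 0 t2)" by blast
  have "\<exists>s2. 0 < s2 \<and> s2 < h \<and> Ft h t2 - Ft 0 t2 = (h - 0) * Fts s2 t2"
    by (rule MVT2[OF h(1)]) (use h t2 in \<open>auto intro!: Fts\<close>)
  then obtain s2 where s2: "0 < s2" "s2 < h" "Ft h t2 - Ft 0 t2 = (h - 0) * Fts s2 t2" by blast
  have "h * (h * Fst s1 t1) = h * (h * Fts s2 t2)"
    using s1(3) t1(3) t2(3) s2(3) by (simp add: algebra_simps)
  with h have "Fst s1 t1 = Fts s2 t2" by simp
  with s1 t1 s2 t2 show thesis by (intro that) auto
qed

lemma mixed_partials_eq_at_0:
  fixes F Fs Ft Fst Fts :: "real \<Rightarrow> real \<Rightarrow> real" and d :: real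
  assumes d: "0 < d"
    and Fs: "\<And>s t. \<bar>s\<bar> < d \<Longrightarrow> \<bar>t\<bar> < d \<Longrightarrow> ((\<lambda>x. F x t) has_real_derivative Fs s t) (at s)"
    and Fst: "\<And>s t. \<bar>s\<bar> < d \<Longrightarrow> \<bar>t\<bar> < d \<Longrightarrow> ((\<lambda>y. Fs s y) has_real_derivative Fst s t) (at t)"
    and Ft: "\<And>s t. \<bar>s\<bar> < d \<Longrightarrow> \<bar>t\<bar> < d \<Longrightarrow> ((\<lambda>y. F s y) has_real_derivative Ft s t) (at t)"
    and Fts: "\<And>s t. \<bar>s\<bar> < d \<Longrightarrow> \<bar>t\<bar> < d \<Longrightarrow> ((\<lambda>x. Ft x t) has_real_derivative Fts s t) (at s)"
    and cont_st: "isCont (\<lambda>(s, t). Fst s t) (0, 0)"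
    and cont_ts: "isCont (\<lambda>(s, t). Fts s t) (0, 0)"
  shows "Fst 0 0 = Fts 0 0"
proof (rule ccontr)
  assume ne: "Fst 0 0 \<noteq> Fts 0 0"
  define e where "e = \<bar>Fst 0 0 - Fts 0 0\<bar> / 2"
  have e: "e > 0" using ne by (simp add: e_def)
  obtain r1 where r1: "r1 > 0" "\<forall>x. dist x (0, 0) < r1 \<longrightarrow> dist (case_prod Fst x) (Fst 0 0) < e"
    using cont_st e unfolding continuous_at_eps_delta by auto
  obtain r2 where r2: "r2 > 0" "\<forall>x. dist x (0, 0) < r2 \<longrightarrow> dist (case_prod Fts x) (Fts 0 0) < e"
    using cont_ts e unfolding continuous_at_eps_delta by auto
  define h where "h = min (min r1 r2) d / 2"
  have h: "0 < h" "h < d" using r1 r2 d by (auto simp: h_def)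
  have near: "dist (s, t) (0, 0) < min r1 r2" if "\<bar>s\<bar> < h" "\<bar>t\<bar> < h" for s t :: real
  proof -
    have "norm (s, t) < 2 * h" using norm_Pair_le[of s t] that by simp
    moreover have "2 * h \<le> min r1 r2" by (simp add: h_def min_le_iff_disj)
    ultimately show ?thesis by (simp add: dist_norm)
  qed
  obtain s1 t1 s2 t2 where st: "\<bar>s1\<bar> < h" "\<bar>t1\<bar> < h" "\<bar>s2\<bar> < h" "\<bar>t2\<bar> < h"
    and eq: "Fst s1 t1 = Fts s2 t2"
    using mixed_partials_mean_value[OF h Fs Fst Ft Fts] by blast
  have "\<bar>Fst s1 t1 - Fst 0 0\<bar> < e"
    using r1(2)[rule_format, of "(s1, t1)"] near[OF st(1,2)] by (simp add: dist_real_def)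
  moreover have "\<bar>Fts s2 t2 - Fts 0 0\<bar> < e"
    using r2(2)[rule_format, of "(s2, t2)"] near[OF st(3,4)] by (simp add: dist_real_def)
  ultimately show False using eq unfolding e_def by (auto simp: abs_if split: if_splits)
qed

section \<open>Directional derivatives on the cylinder\<close>

definition line_dom :: "(real^'n) \<times> real \<Rightarrow> (real^'n) \<times> real \<Rightarrow> real set" where
  "line_dom z v = {h. z + h *\<^sub>R v \<in> Q1}"

definition coord_dirs :: "((real^'n) \<times> real) set" where
  "coord_dirs = range espace \<union> {etime}"

lemma espace_in_coord_dirs: "espace i \<in> coord_dirs"
  and etime_in_coord_dirs: "etime \<in> coord_dirs"
  by (auto simp: coord_dirs_def)

lemma interior_Q1: "interior Q1 = ball (0::real^'n) 1 \<times> {-1<..<0}"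
proof -
  have "interior {-1<..(0::real)} = interior ({-1<..} \<inter> {..0})"
    by (rule arg_cong[where f = interior]) auto
  also have "\<dots> = {-1<..<0}"
    by (auto simp: interior_Int interior_open[OF open_greaterThan])
  finally have "interior {-1<..(0::real)} = {-1<..<0}" .
  then show ?thesis by (simp add: Q1_def interior_Times)
qed

lemma Q1_subset_closure_interior: "Q1 \<subseteq> closure (interior (Q1 :: ((real^'n) \<times> real) set))"
  unfolding interior_Q1 by (auto simp: Q1_def closure_Times)

lemma dds_append: "dds S vs (dds S ws g) = dds S (vs @ ws) g"
  by (induction vs) auto

lemma smooth_on_dds: "smooth_on S g \<Longrightarrow> smooth_on S (dds S ws g)"
  unfolding smooth_on_def dds_append by (metis append_Cons)

lemma smooth_on_continuous_on: "smooth_on S g \<Longrightarrow> continuous_on S (dds S vs g)"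
  unfolding smooth_on_def by blast

lemma smooth_on_has_real_derivative:
  assumes "smooth_on Q1 g" "z \<in> Q1"
  shows "((\<lambda>h. dds Q1 vs g (z + h *\<^sub>R v)) has_real_derivative dds Q1 (v # vs) g z)
           (at 0 within line_dom z v)"
  using assms unfolding smooth_on_def line_dom_def has_real_derivative_iff_has_vector_derivative
  by blast

lemma line_dom_nontrivial:
  assumes z: "z \<in> Q1" and v: "v \<in> coord_dirs"
  shows "at 0 within line_dom z v \<noteq> bot"
proof -
  obtain x t where zx: "z = (x, t)" by (cases z)
  have x: "norm x < 1" and t: "-1 < t" "t \<le> 0" using z by (auto simp: zx Q1_def)
  obtain \<delta> :: real where \<delta>: "\<delta> > 0" "{-\<delta>..0} \<subseteq> line_dom z v"
  proof (cases "v = etime")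
    case True
    have "-1 < t + h" if "-((t + 1) / 2) \<le> h" for h
      using that t by (simp add: field_simps)
    then show ?thesis
      using t x by (intro that[of "(t + 1) / 2"]) (auto simp: line_dom_def True etime_def zx Q1_def)
  next
    case False
    then obtain i where vi: "v = espace i" using v by (auto simp: coord_dirs_def)
    have "norm (x + h *\<^sub>R axis i 1) < 1" if "-((1 - norm x) / 2) \<le> h" "h \<le> 0" for h
    proof -
      have "norm (x + h *\<^sub>R axis i 1) \<le> norm x - h"
        using norm_triangle_ineq[of x "h *\<^sub>R axis i (1::real)"] that(2) by simp
      moreover have "- 2 * h \<le> 1 - norm x" using that(1) by (simp add: field_simps)
      ultimately show ?thesis using x by linarith
    qed
    then show ?thesis
      using t x by (intro that[of "(1 - norm x) / 2"]) (auto simp: line_dom_def vi espace_def zx Q1_def)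
  qed
  then have "0 islimpt line_dom z v" using islimpt_subset[of 0 "{-\<delta>..0}"] by simp
  then show ?thesis using trivial_limit_within by blast
qed

lemma ddir_eqI:
  assumes "z \<in> Q1" "v \<in> coord_dirs"
    and "((\<lambda>h. f (z + h *\<^sub>R v)) has_real_derivative D) (at 0 within line_dom z v)"
  shows "ddir Q1 v f z = D"
  using vector_derivative_within[OF line_dom_nontrivial[OF assms(1,2)]] assms(3)
  by (simp add: ddir_def line_dom_def has_real_derivative_iff_has_vector_derivative)

lemma ddir_cong:
  assumes "\<forall>y\<in>S. f y = g y" "z \<in> S"
  shows "ddir S v f z = ddir S v g z"
proof -
  have "((\<lambda>h. f (z + h *\<^sub>R v)) has_vector_derivative D) (at 0 within {h. z + h *\<^sub>R v \<in> S})
    \<longleftrightarrow> ((\<lambda>h. g (z + h *\<^sub>R v)) has_vector_derivative D) (at 0 within {h. z + h *\<^sub>R v \<in> S})" for D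
  proof
    assume "((\<lambda>h. f (z + h *\<^sub>R v)) has_vector_derivative D) (at 0 within {h. z + h *\<^sub>R v \<in> S})"
    then show "((\<lambda>h. g (z + h *\<^sub>R v)) has_vector_derivative D) (at 0 within {h. z + h *\<^sub>R v \<in> S})"
      by (rule has_vector_derivative_transform_within[where d = 1]) (use assms in auto)
  next
    assume "((\<lambda>h. g (z + h *\<^sub>R v)) has_vector_derivative D) (at 0 within {h. z + h *\<^sub>R v \<in> S})"
    then show "((\<lambda>h. f (z + h *\<^sub>R v)) has_vector_derivative D) (at 0 within {h. z + h *\<^sub>R v \<in> S})"
      by (rule has_vector_derivative_transform_within[where d = 1]) (use assms in auto)
  qed
  then show ?thesis by (simp add: ddir_def vector_derivative_def)
qed

lemma smooth_on_has_real_derivative_interior: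
  assumes g: "smooth_on Q1 g" and y: "y \<in> interior Q1"
  shows "((\<lambda>x. dds Q1 vs g (y + (x - s) *\<^sub>R v)) has_real_derivative dds Q1 (v # vs) g y) (at s)"
proof -
  let ?A = "{h::real. y + h *\<^sub>R v \<in> interior Q1}"
  have "open ?A"
    using continuous_open_vimage[OF open_interior, of "\<lambda>h. y + h *\<^sub>R v"]
    by (auto simp: vimage_def intro!: continuous_intros)
  moreover have "0 \<in> ?A" "?A \<subseteq> line_dom y v"
    using y interior_subset by (auto simp: line_dom_def)
  ultimately have "0 \<in> interior (line_dom y v)"
    using interior_maximal by blast
  then have "at 0 within line_dom y v = at 0"
    by (rule at_within_interior)
  then have "((\<lambda>h. dds Q1 vs g (y + h *\<^sub>R v)) has_real_derivative dds Q1 (v # vs) g y) (at 0)"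
    using smooth_on_has_real_derivative[OF g, of y vs v] y interior_subset by auto
  then have "((\<lambda>x. dds Q1 vs g (y + (x + - s) *\<^sub>R v)) has_real_derivative dds Q1 (v # vs) g y) (at s)"
    using DERIV_shift[of "\<lambda>h. dds Q1 vs g (y + h *\<^sub>R v)" _ s "-s"] by simp
  then show ?thesis by simp
qed

lemma open_contains_plane_square:
  fixes S :: "'a::real_normed_vector set"
  assumes "open S" "z \<in> S"
  obtains d where "d > 0" "\<And>s t. \<bar>s\<bar> < d \<Longrightarrow> \<bar>t\<bar> < d \<Longrightarrow> z + s *\<^sub>R v + t *\<^sub>R w \<in> S"
proof -
  define P where "P x = z + fst x *\<^sub>R v + snd x *\<^sub>R w" for x :: "real \<times> real"
  have "open (P -` S)"
    by (rule open_vimage[OF assms(1)]) (unfold P_def, intro continuous_intros)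
  moreover have "(0, 0) \<in> P -` S" using assms(2) by (simp add: P_def)
  ultimately obtain r where r: "r > 0" "ball (0, 0) r \<subseteq> P -` S"
    using open_contains_ball by blast
  show thesis
  proof (rule that)
    fix s t :: real assume "\<bar>s\<bar> < r / 2" "\<bar>t\<bar> < r / 2"
    then have "dist (s, t) (0, 0) < r"
      using norm_Pair_le[of s t] by (simp add: dist_norm)
    then have "(s, t) \<in> ball (0, 0) r" by (simp add: dist_commute)
    then show "z + s *\<^sub>R v + t *\<^sub>R w \<in> S" using r(2) by (auto simp: P_def)
  qed (use r in simp)
qed

lemma dds_swap_interior:
  assumes g: "smooth_on Q1 g" and z: "z \<in> interior Q1"
  shows "dds Q1 [w, v] g z = dds Q1 [v, w] g z"
proof -
  obtain d where d: "d > 0"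
    and inner: "\<And>s t. \<bar>s\<bar> < d \<Longrightarrow> \<bar>t\<bar> < d \<Longrightarrow> z + s *\<^sub>R v + t *\<^sub>R w \<in> interior Q1"
    using open_contains_plane_square[OF open_interior z] by blast
  define P where "P x = z + fst x *\<^sub>R v + snd x *\<^sub>R w" for x :: "real \<times> real"
  have cont_dds: "isCont (\<lambda>(s, t). dds Q1 vs g (P (s, t))) (0, 0)" for vs
  proof -
    have "isCont (dds Q1 vs g) (P (0, 0))"
      using continuous_on_interior[OF smooth_on_continuous_on[OF g] z] by (simp add: P_def)
    moreover have "isCont P (0, 0)"
      unfolding P_def by (intro continuous_intros)
    ultimately show ?thesis
      using continuous_at_compose[of "(0, 0)" P "dds Q1 vs g"] by (simp add: o_def split_def)
  qed
  have "dds Q1 [w, v] g (P (0, 0)) = dds Q1 [v, w] g (P (0, 0))"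
  proof (rule mixed_partials_eq_at_0[where F = "\<lambda>s t. g (P (s, t))"
        and Fs = "\<lambda>s t. dds Q1 [v] g (P (s, t))" and Ft = "\<lambda>s t. dds Q1 [w] g (P (s, t))",
        OF _ _ _ _ _ cont_dds cont_dds])
    show "0 < d" by (rule d)
    fix s t :: real assume "\<bar>s\<bar> < d" "\<bar>t\<bar> < d"
    then have "P (s, t) \<in> interior Q1" unfolding P_def by (simp add: inner)
    define y where "y = P (s, t)"
    have y: "y \<in> interior Q1" unfolding y_def by fact
    have lines: "\<And>x. P (x, t) = y + (x - s) *\<^sub>R v" "\<And>x. P (s, x) = y + (x - t) *\<^sub>R w"
      by (auto simp: y_def P_def algebra_simps)
    show "((\<lambda>x. g (P (x, t))) has_real_derivative dds Q1 [v] g (P (s, t))) (at s)"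
      using smooth_on_has_real_derivative_interior[OF g y, of "[]" s v] unfolding lines by simp
    show "((\<lambda>x. dds Q1 [v] g (P (s, x))) has_real_derivative dds Q1 [w, v] g (P (s, t))) (at t)"
      using smooth_on_has_real_derivative_interior[OF g y, of "[v]" t w] unfolding lines by simp
    show "((\<lambda>x. g (P (s, x))) has_real_derivative dds Q1 [w] g (P (s, t))) (at t)"
      using smooth_on_has_real_derivative_interior[OF g y, of "[]" t w] unfolding lines by simp
    show "((\<lambda>x. dds Q1 [w] g (P (x, t))) has_real_derivative dds Q1 [v, w] g (P (s, t))) (at s)"
      using smooth_on_has_real_derivative_interior[OF g y, of "[w]" s v] unfolding lines by simp
  qed
  then show ?thesis by (simp add: P_def)
qed

lemma dds_swap:
  assumes g: "smooth_on Q1 g" and z: "z \<in> Q1"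
  shows "dds Q1 [w, v] g z = dds Q1 [v, w] g z"
proof -
  let ?f = "\<lambda>y. dds Q1 [w, v] g y - dds Q1 [v, w] g y"
  have "continuous_on Q1 ?f"
    by (intro continuous_on_diff smooth_on_continuous_on[OF g])
  then have "closedin (top_of_set Q1) {y \<in> Q1. ?f y = 0}"
    by (rule continuous_closedin_preimage_constant)
  then obtain C where C: "closed C" "{y \<in> Q1. ?f y = 0} = Q1 \<inter> C"
    unfolding closedin_closed by blast
  have "interior Q1 \<subseteq> {y \<in> Q1. ?f y = 0}"
    using dds_swap_interior[OF g] interior_subset by fastforce
  then have "closure (interior Q1) \<subseteq> C"
    using C closure_minimal by blast
  then have "z \<in> {y \<in> Q1. ?f y = 0}"
    using C(2) Q1_subset_closure_interior z by blast
  then show ?thesis by simp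
qed

lemma dds_swap3:
  assumes u: "smooth_on Q1 u" and z: "z \<in> Q1"
  shows "dds Q1 [k, i, j] u z = dds Q1 [i, j, k] u z"
proof -
  have "dds Q1 [k, i, j] u z = dds Q1 [k, i] (dds Q1 [j] u) z"
    by (simp add: dds_append)
  also have "\<dots> = dds Q1 [i, k, j] u z"
    using dds_swap[OF smooth_on_dds[OF u, of "[j]"] z, of k i] by (simp add: dds_append)
  also have "\<dots> = dds Q1 [i, j, k] u z"
    using ddir_cong[of Q1 "dds Q1 [k, j] u" "dds Q1 [j, k] u" z i] dds_swap[OF u] z by simp
  finally show ?thesis .
qed

section \<open>The pointwise inequality\<close>

text \<open>\<open>coef p W q\<close> is \<open>a\<^sub>i\<^sub>j(q)\<close> with \<open>|q|\<^sup>2 + \<epsilon>\<^sup>2\<close> replaced by an independent \<open>W\<close>. For \<open>q = \<nabla>u\<close> and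
  \<open>D = D\<^sup>2u\<close>, \<open>dnormsq q D i\<close> is \<open>\<partial>\<^sub>i |\<nabla>u|\<^sup>2\<close> and \<open>dcoef p W q D k i j\<close> is \<open>\<partial>\<^sub>k a\<^sub>i\<^sub>j(\<nabla>u)\<close>.\<close>

definition coef :: "real \<Rightarrow> real \<Rightarrow> ('n \<Rightarrow> real) \<Rightarrow> 'n \<Rightarrow> 'n \<Rightarrow> real" where
  "coef p W q i j = (if i = j then 1 else 0) + (p - 2) * (q i * q j) / W"

definition dnormsq :: "('n::finite \<Rightarrow> real) \<Rightarrow> ('n \<Rightarrow> 'n \<Rightarrow> real) \<Rightarrow> 'n \<Rightarrow> real" where
  "dnormsq q D i = 2 * (\<Sum>k\<in>UNIV. q k * D i k)"

definition dcoef ::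
    "real \<Rightarrow> real \<Rightarrow> ('n::finite \<Rightarrow> real) \<Rightarrow> ('n \<Rightarrow> 'n \<Rightarrow> real) \<Rightarrow> 'n \<Rightarrow> 'n \<Rightarrow> 'n \<Rightarrow> real" where
  "dcoef p W q D k i j = (p - 2) * (((D k i * q j + q i * D k j) * W - q i * q j * dnormsq q D k) / W\<^sup>2)"

lemma sum_sum_delta:
  "(\<Sum>i\<in>UNIV. \<Sum>j\<in>UNIV. (if i = j then (1::real) else 0) * f i j) = (\<Sum>i\<in>UNIV. f i (i::'n::finite))"
proof -
  have "(\<Sum>j\<in>UNIV. (if i = j then (1::real) else 0) * f i j) = (\<Sum>j\<in>UNIV. if i = j then f i j else 0)" for i
    by (rule sum.cong) auto
  then show ?thesis by simp
qed

lemma sum_sum_eq_sum_pairs: "(\<Sum>i\<in>UNIV. \<Sum>j\<in>UNIV. f i j) = (\<Sum>x\<in>UNIV. f (fst x) (snd x))"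
  by (simp only: sum.cartesian_product UNIV_Times_UNIV split_def)

lemma sum_rotate3:
  "(\<Sum>k\<in>UNIV. \<Sum>i\<in>UNIV. \<Sum>j\<in>UNIV. f k i j) = (\<Sum>i\<in>UNIV. \<Sum>j\<in>UNIV. \<Sum>k\<in>UNIV. (f k i j :: real))"
proof -
  have "(\<Sum>k\<in>UNIV. \<Sum>i\<in>UNIV. \<Sum>j\<in>UNIV. f k i j) = (\<Sum>i\<in>UNIV. \<Sum>k\<in>UNIV. \<Sum>j\<in>UNIV. f k i j)"
    by (rule sum.swap)
  also have "\<dots> = (\<Sum>i\<in>UNIV. \<Sum>j\<in>UNIV. \<Sum>k\<in>UNIV. f k i j)"
    by (rule sum.cong[OF refl], rule sum.swap)
  finally show ?thesis .
qed

lemma quadratic_form_sq_le: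
  fixes q :: "'n::finite \<Rightarrow> real"
  shows "(\<Sum>i\<in>UNIV. \<Sum>j\<in>UNIV. q i * D i j * q j)\<^sup>2
           \<le> (\<Sum>i\<in>UNIV. \<Sum>j\<in>UNIV. (D i j)\<^sup>2) * (\<Sum>k\<in>UNIV. (q k)\<^sup>2)\<^sup>2"
proof -
  have "(\<Sum>i\<in>UNIV. \<Sum>j\<in>UNIV. q i * D i j * q j)
      = (\<Sum>x\<in>UNIV. D (fst x) (snd x) * (q (fst x) * q (snd x)))"
    by (simp add: sum_sum_eq_sum_pairs algebra_simps)
  also have "\<dots>\<^sup>2 \<le> (\<Sum>x\<in>UNIV. (D (fst x) (snd x))\<^sup>2) * (\<Sum>x\<in>UNIV. (q (fst x) * q (snd x))\<^sup>2)"
    by (rule Cauchy_Schwarz_ineq_sum)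
  also have "(\<Sum>x\<in>UNIV. (D (fst x) (snd x))\<^sup>2) = (\<Sum>i\<in>UNIV. \<Sum>j\<in>UNIV. (D i j)\<^sup>2)"
    by (simp add: sum_sum_eq_sum_pairs)
  also have "(\<Sum>x\<in>UNIV. (q (fst x) * q (snd x))\<^sup>2) = (\<Sum>k\<in>UNIV. (q k)\<^sup>2)\<^sup>2"
    unfolding sum_sum_eq_sum_pairs[of "\<lambda>i j. (q i * q j)\<^sup>2", simplified, symmetric]
    by (simp add: power2_eq_square sum_distrib_left sum_distrib_right algebra_simps)
  finally show ?thesis .
qed

lemma sum_q_third_order_rotate:
  fixes q :: "'n::finite \<Rightarrow> real" and A :: "'n \<Rightarrow> 'n \<Rightarrow> real" and T :: "'n \<Rightarrow> 'n \<Rightarrow> 'n \<Rightarrow> real"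
  assumes T_rotate: "\<And>i j k. T k i j = T i j k"
  shows "(\<Sum>k\<in>UNIV. q k * (\<Sum>i\<in>UNIV. \<Sum>j\<in>UNIV. A i j * T k i j))
       = (\<Sum>i\<in>UNIV. \<Sum>j\<in>UNIV. A i j * (\<Sum>k\<in>UNIV. q k * T i j k))"
proof -
  have "(\<Sum>k\<in>UNIV. q k * (\<Sum>i\<in>UNIV. \<Sum>j\<in>UNIV. A i j * T k i j))
      = (\<Sum>k\<in>UNIV. \<Sum>i\<in>UNIV. \<Sum>j\<in>UNIV. A i j * (q k * T k i j))"
    by (simp add: sum_distrib_left mult_ac)
  also have "\<dots> = (\<Sum>i\<in>UNIV. \<Sum>j\<in>UNIV. \<Sum>k\<in>UNIV. A i j * (q k * T k i j))"
    by (rule sum_rotate3)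
  also have "\<dots> = (\<Sum>i\<in>UNIV. \<Sum>j\<in>UNIV. A i j * (\<Sum>k\<in>UNIV. q k * T k i j))"
    by (simp add: sum_distrib_left)
  finally show ?thesis by (simp add: T_rotate)
qed

text \<open>With \<open>M = |H|\<^sup>2\<close>, \<open>N = |H\<nabla>u|\<^sup>2\<close> and \<open>m = \<nabla>u\<cdot>H\<nabla>u\<close>, the left-hand side is
  \<open>\<phi>\<^sub>t - a\<^sub>i\<^sub>j\<phi>\<^sub>i\<^sub>j\<close>, once the third-order terms have cancelled; the terms in \<open>N\<close> cancel as well.\<close>

lemma reduced_operator_nonpos:
  fixes p W M N m :: real
  assumes p: "p > 0" and W: "W > 0" and cs: "m\<^sup>2 \<le> M * W\<^sup>2"
  shows "2 * (p/2) * W powr (p/2 - 1) * ((p - 2) * (2 * N / W - 2 * m\<^sup>2 / W\<^sup>2))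
       - (p/2) * (p/2 - 1) * W powr (p/2 - 2) * (4 * (N + (p - 2) * m\<^sup>2 / W))
       - 2 * (p/2) * W powr (p/2 - 1) * (M + (p - 2) * N / W) \<le> 0"
proof -
  have "W powr (p/2 - 1) = W powr (1 + (p/2 - 2))" by simp
  also have "\<dots> = W powr 1 * W powr (p/2 - 2)" by (rule powr_add)
  finally have Wr: "W powr (p/2 - 1) = W * W powr (p/2 - 2)" using W by simp
  have "W\<^sup>2 * M + p * (p - 2) * m\<^sup>2 = (W\<^sup>2 * M - m\<^sup>2) + (p - 1)\<^sup>2 * m\<^sup>2"
    by (simp add: power2_eq_square algebra_simps)
  also have "\<dots> \<ge> 0" using cs by (simp add: mult.commute)
  finally have "(p * W powr (p/2 - 2) / W) * (W\<^sup>2 * M + p * (p - 2) * m\<^sup>2) \<ge> 0"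
    using p W by simp
  moreover have "2 * (p/2) * W powr (p/2 - 1) * ((p - 2) * (2 * N / W - 2 * m\<^sup>2 / W\<^sup>2))
       - (p/2) * (p/2 - 1) * W powr (p/2 - 2) * (4 * (N + (p - 2) * m\<^sup>2 / W))
       - 2 * (p/2) * W powr (p/2 - 1) * (M + (p - 2) * N / W)
       = - (p * W powr (p/2 - 2) / W) * (W\<^sup>2 * M + p * (p - 2) * m\<^sup>2)"
    using W unfolding Wr by (simp add: field_simps power2_eq_square)
  ultimately show ?thesis by linarith
qed

context
  fixes q :: "'n::finite \<Rightarrow> real" and D :: "'n \<Rightarrow> 'n \<Rightarrow> real"
  assumes D_sym: "\<And>i k. D i k = D k i"
begin

definition "Dq i = (\<Sum>l\<in>UNIV. D i l * q l)"
definition "norm_Dq_sq = (\<Sum>i\<in>UNIV. (Dq i)\<^sup>2)"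
definition "qDq = (\<Sum>i\<in>UNIV. q i * Dq i)"
definition "norm_D_sq = (\<Sum>i\<in>UNIV. \<Sum>j\<in>UNIV. (D i j)\<^sup>2)"

lemma dnormsq_eq_Dq: "dnormsq q D i = 2 * Dq i"
  by (simp add: dnormsq_def Dq_def mult.commute)

lemma sum_q_D_eq_Dq: "(\<Sum>i\<in>UNIV. q i * D i k) = Dq k"
  unfolding Dq_def by (rule sum.cong) (auto simp: D_sym mult.commute)

lemma qDq_eq_quadratic_form: "qDq = (\<Sum>i\<in>UNIV. \<Sum>j\<in>UNIV. q i * D i j * q j)"
  by (simp add: qDq_def Dq_def sum_distrib_left mult.assoc)

lemma sum_coef_D_D:
  "(\<Sum>i\<in>UNIV. \<Sum>j\<in>UNIV. coef p W q i j * (\<Sum>k\<in>UNIV. D i k * D j k))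
     = norm_D_sq + (p - 2) * norm_Dq_sq / W"
proof -
  have split: "coef p W q i j * S = (if i = j then 1 else 0) * S + ((p - 2) / W) * (q i * q j * S)"
    for i j S by (simp add: coef_def distrib_right)
  have "(\<Sum>i\<in>UNIV. \<Sum>j\<in>UNIV. q i * q j * (\<Sum>k\<in>UNIV. D i k * D j k))
      = (\<Sum>i\<in>UNIV. \<Sum>j\<in>UNIV. \<Sum>k\<in>UNIV. q i * D i k * (q j * D j k))"
    by (simp add: sum_distrib_left mult_ac)
  also have "\<dots> = (\<Sum>k\<in>UNIV. \<Sum>i\<in>UNIV. \<Sum>j\<in>UNIV. q i * D i k * (q j * D j k))"
    by (rule sum_rotate3[symmetric])
  also have "\<dots> = (\<Sum>k\<in>UNIV. Dq k * Dq k)"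
    by (simp add: sum_product[symmetric] sum_q_D_eq_Dq)
  finally have "(\<Sum>i\<in>UNIV. \<Sum>j\<in>UNIV. q i * q j * (\<Sum>k\<in>UNIV. D i k * D j k)) = norm_Dq_sq"
    by (simp add: norm_Dq_sq_def power2_eq_square)
  then show ?thesis
    by (simp only: split sum.distrib sum_distrib_left[symmetric] sum_sum_delta)
      (simp add: norm_D_sq_def power2_eq_square)
qed

lemma sum_coef_dnormsq:
  "(\<Sum>i\<in>UNIV. \<Sum>j\<in>UNIV. coef p W q i j * dnormsq q D i * dnormsq q D j)
     = 4 * (norm_Dq_sq + (p - 2) * qDq\<^sup>2 / W)"
proof -
  have "(\<Sum>i\<in>UNIV. \<Sum>j\<in>UNIV. coef p W q i j * dnormsq q D i * dnormsq q D j)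
      = 4 * (\<Sum>i\<in>UNIV. \<Sum>j\<in>UNIV. (if i = j then 1 else 0) * (Dq i * Dq j))
        + 4 * ((p - 2) / W) * ((\<Sum>i\<in>UNIV. q i * Dq i) * (\<Sum>j\<in>UNIV. q j * Dq j))"
    by (simp add: dnormsq_eq_Dq coef_def sum_product distrib_right sum.distrib sum_distrib_left
        algebra_simps)
  also have "(\<Sum>i\<in>UNIV. \<Sum>j\<in>UNIV. (if i = j then 1 else 0) * (Dq i * Dq j)) = norm_Dq_sq"
    unfolding sum_sum_delta norm_Dq_sq_def by (simp add: power2_eq_square)
  finally show ?thesis by (simp add: qDq_def power2_eq_square algebra_simps)
qed

lemma sum_q_dcoef_D:
  "(\<Sum>k\<in>UNIV. q k * (\<Sum>i\<in>UNIV. \<Sum>j\<in>UNIV. dcoef p W q D k i j * D i j))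
     = (p - 2) * (2 * norm_Dq_sq / W - 2 * qDq\<^sup>2 / W\<^sup>2)"
proof -
  let ?X1 = "\<Sum>k\<in>UNIV. \<Sum>i\<in>UNIV. \<Sum>j\<in>UNIV. q k * (D k i * q j * D i j)"
  let ?X2 = "\<Sum>k\<in>UNIV. \<Sum>i\<in>UNIV. \<Sum>j\<in>UNIV. q k * (q i * D k j * D i j)"
  let ?Y = "\<Sum>k\<in>UNIV. \<Sum>i\<in>UNIV. \<Sum>j\<in>UNIV. q k * (dnormsq q D k * (q i * q j * D i j))"
  have "dcoef p W q D k i j * D i j = (p - 2) / W\<^sup>2 * (W * (D k i * q j * D i j)
      + W * (q i * D k j * D i j) - dnormsq q D k * (q i * q j * D i j))" for k i j
    by (cases "W = 0") (simp_all add: dcoef_def field_simps)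
  then have expand: "(\<Sum>k\<in>UNIV. q k * (\<Sum>i\<in>UNIV. \<Sum>j\<in>UNIV. dcoef p W q D k i j * D i j))
      = (p - 2) / W\<^sup>2 * (W * ?X1 + W * ?X2 - ?Y)"
    by (simp add: sum_distrib_left sum_distrib_right sum.distrib sum_subtractf right_diff_distrib
        distrib_left mult_ac)
  have "?X1 = (\<Sum>i\<in>UNIV. \<Sum>k\<in>UNIV. \<Sum>j\<in>UNIV. q k * D k i * (D i j * q j))"
    by (subst sum.swap) (simp add: mult_ac)
  also have "\<dots> = (\<Sum>i\<in>UNIV. (\<Sum>k\<in>UNIV. q k * D k i) * (\<Sum>j\<in>UNIV. D i j * q j))"
    by (simp add: sum_product)
  finally have X1: "?X1 = norm_Dq_sq"
    by (simp add: sum_q_D_eq_Dq Dq_def[symmetric] norm_Dq_sq_def power2_eq_square)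
  have "?X2 = (\<Sum>j\<in>UNIV. (\<Sum>k\<in>UNIV. q k * D k j) * (\<Sum>i\<in>UNIV. q i * D i j))"
  proof -
    have "?X2 = (\<Sum>i\<in>UNIV. \<Sum>j\<in>UNIV. \<Sum>k\<in>UNIV. q k * (q i * D k j * D i j))"
      by (rule sum_rotate3)
    also have "\<dots> = (\<Sum>j\<in>UNIV. \<Sum>i\<in>UNIV. \<Sum>k\<in>UNIV. q k * (q i * D k j * D i j))"
      by (rule sum.swap)
    also have "\<dots> = (\<Sum>j\<in>UNIV. \<Sum>k\<in>UNIV. \<Sum>i\<in>UNIV. q k * D k j * (q i * D i j))"
      by (rule sum.cong[OF refl], subst sum.swap) (simp add: mult_ac)
    finally show ?thesis by (simp add: sum_product)
  qed
  then have X2: "?X2 = norm_Dq_sq"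
    by (simp add: sum_q_D_eq_Dq norm_Dq_sq_def power2_eq_square)
  have "?Y = (\<Sum>k\<in>UNIV. q k * dnormsq q D k) * (\<Sum>i\<in>UNIV. \<Sum>j\<in>UNIV. q i * q j * D i j)"
    by (subst sum_rotate3) (simp only: sum_distrib_left sum_distrib_right mult.assoc)
  also have "\<dots> = 2 * qDq * qDq"
  proof -
    have "(\<Sum>k\<in>UNIV. q k * dnormsq q D k) = 2 * qDq"
      by (simp add: dnormsq_eq_Dq qDq_def sum_distrib_left mult_ac)
    moreover have "(\<Sum>i\<in>UNIV. \<Sum>j\<in>UNIV. q i * q j * D i j) = qDq"
      unfolding qDq_eq_quadratic_form by (simp add: mult_ac)
    ultimately show ?thesis by simp
  qed
  finally have Y: "?Y = 2 * qDq * qDq" .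
  show ?thesis unfolding expand X1 X2 Y
    by (cases "W = 0") (simp_all add: field_simps power2_eq_square)
qed

lemma parabolic_expansion_nonpos:
  fixes T :: "'n \<Rightarrow> 'n \<Rightarrow> 'n \<Rightarrow> real" and Tm :: "'n \<Rightarrow> real"
  assumes T_rotate: "\<And>i j k. T k i j = T i j k"
    and Tm: "\<And>k. Tm k = (\<Sum>i\<in>UNIV. \<Sum>j\<in>UNIV. dcoef p W q D k i j * D i j + coef p W q i j * T k i j)"
    and p: "p > 0" and W: "W > 0" and q_le: "(\<Sum>k\<in>UNIV. (q k)\<^sup>2) \<le> W"
  shows "(p/2) * W powr (p/2 - 1) * (2 * (\<Sum>k\<in>UNIV. q k * Tm k))
     - (\<Sum>i\<in>UNIV. \<Sum>j\<in>UNIV. coef p W q i j *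
          ((p/2) * ((p/2 - 1) * W powr (p/2 - 2) * dnormsq q D i) * dnormsq q D j
           + (p/2) * W powr (p/2 - 1) * (2 * (\<Sum>k\<in>UNIV. D i k * D j k + q k * T i j k)))) \<le> 0"
proof -
  let ?c1 = "(p/2) * (p/2 - 1) * W powr (p/2 - 2)" and ?c2 = "2 * (p/2) * W powr (p/2 - 1)"
  have time_part: "(\<Sum>k\<in>UNIV. q k * Tm k)
      = (\<Sum>k\<in>UNIV. q k * (\<Sum>i\<in>UNIV. \<Sum>j\<in>UNIV. dcoef p W q D k i j * D i j))
        + (\<Sum>k\<in>UNIV. q k * (\<Sum>i\<in>UNIV. \<Sum>j\<in>UNIV. coef p W q i j * T k i j))"
    by (simp add: Tm sum.distrib distrib_left)
  have "coef p W q i j * ((p/2) * ((p/2 - 1) * W powr (p/2 - 2) * dnormsq q D i) * dnormsq q D j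
          + (p/2) * W powr (p/2 - 1) * (2 * (\<Sum>k\<in>UNIV. D i k * D j k + q k * T i j k)))
        = ?c1 * (coef p W q i j * dnormsq q D i * dnormsq q D j)
          + ?c2 * (coef p W q i j * (\<Sum>k\<in>UNIV. D i k * D j k))
          + ?c2 * (coef p W q i j * (\<Sum>k\<in>UNIV. q k * T i j k))" for i j
    by (simp add: sum.distrib algebra_simps)
  then have operator_part: "(\<Sum>i\<in>UNIV. \<Sum>j\<in>UNIV. coef p W q i j *
          ((p/2) * ((p/2 - 1) * W powr (p/2 - 2) * dnormsq q D i) * dnormsq q D j
           + (p/2) * W powr (p/2 - 1) * (2 * (\<Sum>k\<in>UNIV. D i k * D j k + q k * T i j k))))
      = ?c1 * (\<Sum>i\<in>UNIV. \<Sum>j\<in>UNIV. coef p W q i j * dnormsq q D i * dnormsq q D j)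
        + ?c2 * (\<Sum>i\<in>UNIV. \<Sum>j\<in>UNIV. coef p W q i j * (\<Sum>k\<in>UNIV. D i k * D j k))
        + ?c2 * (\<Sum>i\<in>UNIV. \<Sum>j\<in>UNIV. coef p W q i j * (\<Sum>k\<in>UNIV. q k * T i j k))"
    by (simp only: sum.distrib sum_distrib_left[symmetric])
  have "qDq\<^sup>2 \<le> norm_D_sq * (\<Sum>k\<in>UNIV. (q k)\<^sup>2)\<^sup>2"
    unfolding qDq_eq_quadratic_form norm_D_sq_def by (rule quadratic_form_sq_le)
  also have "\<dots> \<le> norm_D_sq * W\<^sup>2"
    using q_le by (intro mult_left_mono power_mono) (auto simp: norm_D_sq_def sum_nonneg)
  finally have "qDq\<^sup>2 \<le> norm_D_sq * W\<^sup>2" .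
  from reduced_operator_nonpos[OF p W this, of norm_Dq_sq] show ?thesis
    unfolding time_part operator_part sum_q_third_order_rotate[OF T_rotate]
      sum_q_dcoef_D sum_coef_dnormsq sum_coef_D_D
    by (simp add: algebra_simps)
qed

end

section \<open>Derivatives of \<open>\<phi>\<close>\<close>

declare dds.simps[simp del]

lemma grad_nth: "grad u y $ k = dds Q1 [espace k] u y"
  by (simp add: grad_def pd1_def)

lemma norm_grad_sq: "(norm (grad u y))\<^sup>2 = (\<Sum>k\<in>UNIV. (dds Q1 [espace k] u y)\<^sup>2)"
  unfolding power2_norm_eq_inner inner_vec_def by (simp add: grad_nth power2_eq_square)

lemma acoef_eq_coef:
  "acoef p \<epsilon> i j (grad u y) = coef p ((norm (grad u y))\<^sup>2 + \<epsilon>\<^sup>2) (\<lambda>k. dds Q1 [espace k] u y) i j"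
  by (simp add: acoef_def coef_def grad_nth)

lemma weight_pos: "(\<epsilon>::real) > 0 \<Longrightarrow> (norm (x::real^'n))\<^sup>2 + \<epsilon>\<^sup>2 > 0"
  by (simp add: add_nonneg_pos)

lemma has_real_derivative_weight:
  assumes u: "smooth_on Q1 u" and z: "z \<in> Q1"
  shows "((\<lambda>h. (norm (grad u (z + h *\<^sub>R v)))\<^sup>2 + \<epsilon>\<^sup>2) has_real_derivative
           2 * (\<Sum>k\<in>UNIV. dds Q1 [espace k] u z * dds Q1 [v, espace k] u z)) (at 0 within line_dom z v)"
proof -
  have d: "((\<lambda>h. dds Q1 [espace k] u (z + h *\<^sub>R v)) has_real_derivative dds Q1 [v, espace k] u z)
      (at 0 within line_dom z v)" for k
    using smooth_on_has_real_derivative[OF u z] by blast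
  have "((\<lambda>h. (\<Sum>k\<in>UNIV. (dds Q1 [espace k] u (z + h *\<^sub>R v))\<^sup>2) + \<epsilon>\<^sup>2) has_real_derivative
      2 * (\<Sum>k\<in>UNIV. dds Q1 [espace k] u z * dds Q1 [v, espace k] u z)) (at 0 within line_dom z v)"
    by (rule DERIV_cong[OF DERIV_add[OF DERIV_sum[OF DERIV_power[OF d]] DERIV_const]])
      (simp add: sum_distrib_left mult_ac)
  then show ?thesis by (simp add: norm_grad_sq)
qed

lemma has_real_derivative_weight_powr:
  assumes u: "smooth_on Q1 u" and z: "z \<in> Q1" and eps: "\<epsilon> > 0"
  shows "((\<lambda>h. ((norm (grad u (z + h *\<^sub>R v)))\<^sup>2 + \<epsilon>\<^sup>2) powr r) has_real_derivative
           r * ((norm (grad u z))\<^sup>2 + \<epsilon>\<^sup>2) powr (r - 1)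
             * (2 * (\<Sum>k\<in>UNIV. dds Q1 [espace k] u z * dds Q1 [v, espace k] u z))) (at 0 within line_dom z v)"
proof -
  have "((\<lambda>w. w powr r) has_real_derivative r * ((norm (grad u (z + 0 *\<^sub>R v)))\<^sup>2 + \<epsilon>\<^sup>2) powr (r - 1))
      (at ((norm (grad u (z + 0 *\<^sub>R v)))\<^sup>2 + \<epsilon>\<^sup>2))"
    by (rule has_real_derivative_powr) (simp add: weight_pos[OF eps])
  from DERIV_chain2[OF this has_real_derivative_weight[OF u z]] show ?thesis by simp
qed

lemma ddir_weight_powr:
  assumes u: "smooth_on Q1 u" and z: "z \<in> Q1" and eps: "\<epsilon> > 0" and v: "v \<in> coord_dirs"
  shows "ddir Q1 v (\<lambda>w. ((norm (grad u w))\<^sup>2 + \<epsilon>\<^sup>2) powr r) z =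
           r * ((norm (grad u z))\<^sup>2 + \<epsilon>\<^sup>2) powr (r - 1)
             * (2 * (\<Sum>k\<in>UNIV. dds Q1 [espace k] u z * dds Q1 [v, espace k] u z))"
  by (rule ddir_eqI[OF z v has_real_derivative_weight_powr[OF u z eps]])

lemma pd2_weight_powr:
  assumes u: "smooth_on Q1 u" and z: "z \<in> Q1" and eps: "\<epsilon> > 0"
  shows "pd2 i j (\<lambda>w. ((norm (grad u w))\<^sup>2 + \<epsilon>\<^sup>2) powr r) z =
    r * ((r - 1) * ((norm (grad u z))\<^sup>2 + \<epsilon>\<^sup>2) powr (r - 2)
        * (2 * (\<Sum>k\<in>UNIV. dds Q1 [espace k] u z * dds Q1 [espace i, espace k] u z)))
      * (2 * (\<Sum>k\<in>UNIV. dds Q1 [espace k] u z * dds Q1 [espace j, espace k] u z))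
    + r * ((norm (grad u z))\<^sup>2 + \<epsilon>\<^sup>2) powr (r - 1)
      * (2 * (\<Sum>k\<in>UNIV. dds Q1 [espace i, espace k] u z * dds Q1 [espace j, espace k] u z
                 + dds Q1 [espace k] u z * dds Q1 [espace i, espace j, espace k] u z))"
proof -
  let ?G = "\<lambda>y. r * ((norm (grad u y))\<^sup>2 + \<epsilon>\<^sup>2) powr (r - 1)
      * (2 * (\<Sum>k\<in>UNIV. dds Q1 [espace k] u y * dds Q1 [espace j, espace k] u y))"
  have G: "\<forall>y\<in>Q1. dds Q1 [espace j] (\<lambda>w. ((norm (grad u w))\<^sup>2 + \<epsilon>\<^sup>2) powr r) y = ?G y"
    using ddir_weight_powr[OF u _ eps espace_in_coord_dirs] by (simp add: dds.simps)
  have d1: "((\<lambda>h. dds Q1 [espace k] u (z + h *\<^sub>R espace i)) has_real_derivative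
      dds Q1 [espace i, espace k] u z) (at 0 within line_dom z (espace i))"
    and d2: "((\<lambda>h. dds Q1 [espace j, espace k] u (z + h *\<^sub>R espace i)) has_real_derivative
      dds Q1 [espace i, espace j, espace k] u z) (at 0 within line_dom z (espace i))" for k
    using smooth_on_has_real_derivative[OF u z] by blast+
  have "((\<lambda>h. ?G (z + h *\<^sub>R espace i)) has_real_derivative
    r * ((r - 1) * ((norm (grad u z))\<^sup>2 + \<epsilon>\<^sup>2) powr (r - 1 - 1)
        * (2 * (\<Sum>k\<in>UNIV. dds Q1 [espace k] u z * dds Q1 [espace i, espace k] u z)))
      * (2 * (\<Sum>k\<in>UNIV. dds Q1 [espace k] u z * dds Q1 [espace j, espace k] u z))
    + r * ((norm (grad u z))\<^sup>2 + \<epsilon>\<^sup>2) powr (r - 1)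
      * (2 * (\<Sum>k\<in>UNIV. dds Q1 [espace i, espace k] u z * dds Q1 [espace j, espace k] u z
                 + dds Q1 [espace k] u z * dds Q1 [espace i, espace j, espace k] u z)))
    (at 0 within line_dom z (espace i))"
    by (rule DERIV_cong[OF DERIV_mult[OF DERIV_cmult[OF has_real_derivative_weight_powr[OF u z eps]]
          DERIV_cmult[OF DERIV_sum[OF DERIV_mult[OF d1 d2]]]]])
      (simp add: algebra_simps sum.distrib)
  from ddir_eqI[OF z espace_in_coord_dirs this] show ?thesis
    using ddir_cong[OF G z] by (simp add: pd2_def dds.simps diff_diff_eq)
qed

lemma dds_time_space:
  assumes u: "smooth_on Q1 u" and z: "z \<in> Q1" and eps: "\<epsilon> > 0"
    and eqn: "\<forall>z\<in>Q1. pdt u z = (\<Sum>i\<in>UNIV. \<Sum>j\<in>UNIV. acoef p \<epsilon> i j (grad u z) * pd2 i j u z)"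
  defines "W \<equiv> (norm (grad u z))\<^sup>2 + \<epsilon>\<^sup>2"
    and "q \<equiv> \<lambda>k. dds Q1 [espace k] u z" and "D \<equiv> \<lambda>i k. dds Q1 [espace i, espace k] u z"
  shows "dds Q1 [etime, espace k] u z =
    (\<Sum>i\<in>UNIV. \<Sum>j\<in>UNIV. dcoef p W q D k i j * D i j
        + coef p W q i j * dds Q1 [espace k, espace i, espace j] u z)"
proof -
  let ?W = "\<lambda>y. (norm (grad u y))\<^sup>2 + \<epsilon>\<^sup>2"
  let ?R = "\<lambda>y. \<Sum>i\<in>UNIV. \<Sum>j\<in>UNIV.
      ((if i = j then 1 else 0) + (p - 2) * (dds Q1 [espace i] u y * dds Q1 [espace j] u y) / ?W y)
        * dds Q1 [espace i, espace j] u y"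
  have R: "\<forall>y\<in>Q1. dds Q1 [etime] u y = ?R y"
    using eqn by (simp add: pdt_def pd2_def acoef_eq_coef coef_def)
  have W: "?W (z + 0 *\<^sub>R espace k) \<noteq> 0" using eps by simp
  have d1: "((\<lambda>h. dds Q1 [espace l] u (z + h *\<^sub>R espace k)) has_real_derivative
      dds Q1 [espace k, espace l] u z) (at 0 within line_dom z (espace k))"
    and d2: "((\<lambda>h. dds Q1 [espace i, espace j] u (z + h *\<^sub>R espace k)) has_real_derivative
      dds Q1 [espace k, espace i, espace j] u z) (at 0 within line_dom z (espace k))" for l i j
    using smooth_on_has_real_derivative[OF u z] by blast+
  have "((\<lambda>h. ?R (z + h *\<^sub>R espace k)) has_real_derivative
    (\<Sum>i\<in>UNIV. \<Sum>j\<in>UNIV. dcoef p W q D k i j * D i j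
        + coef p W q i j * dds Q1 [espace k, espace i, espace j] u z)) (at 0 within line_dom z (espace k))"
    by (rule DERIV_cong[OF DERIV_sum[OF DERIV_sum[OF DERIV_mult[OF DERIV_add[OF DERIV_const
          DERIV_divide[OF DERIV_cmult[OF DERIV_mult[OF d1 d1]] has_real_derivative_weight[OF u z] W]] d2]]]])
      (intro sum.cong refl; simp add: W_def q_def D_def dcoef_def coef_def dnormsq_def W field_simps
        power2_eq_square)
  from ddir_eqI[OF z espace_in_coord_dirs this] ddir_cong[OF R z]
  have "dds Q1 [espace k, etime] u z = (\<Sum>i\<in>UNIV. \<Sum>j\<in>UNIV. dcoef p W q D k i j * D i j
        + coef p W q i j * dds Q1 [espace k, espace i, espace j] u z)"
    by (simp add: dds.simps)
  then show ?thesis using dds_swap[OF u z] by metis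
qed

theorem lemma3p1:
  fixes u :: "(real^'n) \<times> real \<Rightarrow> real" and p \<epsilon> :: real
  assumes "1 < p" and "0 < \<epsilon>"
    and "smooth_on Q1 u"
    and "\<forall>z\<in>Q1. pdt u z = (\<Sum>i\<in>UNIV. \<Sum>j\<in>UNIV. acoef p \<epsilon> i j (grad u z) * pd2 i j u z)"
  shows "\<forall>z\<in>Q1. pdt (\<lambda>w. ((norm (grad u w))\<^sup>2 + \<epsilon>\<^sup>2) powr (p / 2)) z
            - (\<Sum>i\<in>UNIV. \<Sum>j\<in>UNIV. acoef p \<epsilon> i j (grad u z)
                 * pd2 i j (\<lambda>w. ((norm (grad u w))\<^sup>2 + \<epsilon>\<^sup>2) powr (p / 2)) z) \<le> 0"
proof
  fix z :: "(real^'n) \<times> real" assume z: "z \<in> Q1"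
  note u = assms(3) and eps = assms(2)
  define W where "W = (norm (grad u z))\<^sup>2 + \<epsilon>\<^sup>2"
  define q where "q = (\<lambda>k. dds Q1 [espace k] u z)"
  define D where "D = (\<lambda>i k. dds Q1 [espace i, espace k] u z)"
  define T where "T = (\<lambda>i j k. dds Q1 [espace i, espace j, espace k] u z)"
  define Tm where "Tm = (\<lambda>k. dds Q1 [etime, espace k] u z)"
  have "\<And>i k. D i k = D k i" unfolding D_def by (rule dds_swap[OF u z])
  moreover have "\<And>i j k. T k i j = T i j k" unfolding T_def by (rule dds_swap3[OF u z])
  moreover have "\<And>k. Tm k = (\<Sum>i\<in>UNIV. \<Sum>j\<in>UNIV. dcoef p W q D k i j * D i j + coef p W q i j * T k i j)"
    unfolding Tm_def W_def q_def D_def T_def by (rule dds_time_space[OF u z eps assms(4)])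
  moreover have "(\<Sum>k\<in>UNIV. (q k)\<^sup>2) \<le> W" unfolding W_def q_def norm_grad_sq by simp
  ultimately have "(p/2) * W powr (p/2 - 1) * (2 * (\<Sum>k\<in>UNIV. q k * Tm k))
     - (\<Sum>i\<in>UNIV. \<Sum>j\<in>UNIV. coef p W q i j *
          ((p/2) * ((p/2 - 1) * W powr (p/2 - 2) * dnormsq q D i) * dnormsq q D j
           + (p/2) * W powr (p/2 - 1) * (2 * (\<Sum>k\<in>UNIV. D i k * D j k + q k * T i j k)))) \<le> 0"
    using assms(1) weight_pos[OF eps] by (intro parabolic_expansion_nonpos) (auto simp: W_def)
  then show "pdt (\<lambda>w. ((norm (grad u w))\<^sup>2 + \<epsilon>\<^sup>2) powr (p / 2)) z
            - (\<Sum>i\<in>UNIV. \<Sum>j\<in>UNIV. acoef p \<epsilon> i j (grad u z)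
                 * pd2 i j (\<lambda>w. ((norm (grad u w))\<^sup>2 + \<epsilon>\<^sup>2) powr (p / 2)) z) \<le> 0"
    by (simp add: pdt_def dds.simps ddir_weight_powr[OF u z eps etime_in_coord_dirs]
        pd2_weight_powr[OF u z eps] acoef_eq_coef dnormsq_def W_def q_def D_def T_def Tm_def)
qed

end
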